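(* Let $n$ and $M$ be positive integers with $M$ dividing $n$, let $N=n/M$, and let $\lambda>0$. Let $\{X_{c,i}: 1\le c\le N,\ 1\le i\le M\}$ be i.i.d. exponential random variables with rate $\lambda$, and define $$\hat V_c=\sum_{i=1}^{M}X_{c,i},\qquad Y_{III}=\max_{1\le c\le N}\hat V_c .$$ Let $\bar{\bar U}_1,\dots,\bar{\bar U}_M$ be i.i.d. random variables, each distributed as the maximum $X_{N:N}$ of $N=n/M$ i.i.d. exponential random variables with rate $\lambda$, and set $\bar{\bar V}=\sum_{i=1}^M\bar{\bar U}_i$. Then $Y_{III}\le\bar{\bar V}$ in the usual stochastic order, i.e. $\Pr(Y_{III}>t)\le\Pr(\bar{\bar V}>t)$ for every real $t$.
   Context: Model: $n$ nodes in a fixed square area are divided into $N=n/M$ cells of $M$ nodes each. In Phase III of the transmission scheme, cells operate in parallel; within each cell, $M$ received packets are relayed one at a time to their intended recipients in the cell, each intra-cell transmission delay being i.i.d. exponential with rate $\lambda$. Thus $\hat V_c$ is the time for cell $c$ to finish Phase III and $Y_{III}$ (the duration of Phase III) is the time until the slowest cell finishes. For random variables $X_1,\dots,X_N$, $X_{k:N}$ denotes the $k$-th smallest. *)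

theory Defs
  imports "HOL-Probability.Probability"
begin

definition max_exp_law :: "nat \<Rightarrow> real \<Rightarrow> real measure" where
  "max_exp_law N l =
     distr (PiM {1..N} (\<lambda>_. density lborel (exponential_density l))) borel
       (\<lambda>x. Max (x ` {1..N}))"

end

theory Submission
  imports Defs
begin

text \<open>A coupling argument. Put \<open>W j = max\<^sub>c X c j\<close>, the maximum of column \<open>j\<close>. Pointwise,
  \<open>max\<^sub>c \<Sum>\<^sub>j X c j \<le> \<Sum>\<^sub>j W j\<close>. The columns of the independent array are disjoint
  groups of variables, so the \<open>W j\<close> are independent, and each is the maximum of \<open>N\<close> i.i.d.
  exponentials. Hence \<open>\<Sum>\<^sub>j W j\<close> has the same law as \<open>\<Sum>\<^sub>j U j\<close>.\<close>

lemma (in prob_space) distr_PiM_indep_vars: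
  assumes indep: "indep_vars M' X I" and "I \<noteq> {}"
    and law: "\<And>i. i \<in> I \<Longrightarrow> distr M (M' i) (X i) = D i"
  shows "distr M (PiM I M') (\<lambda>\<omega>. \<lambda>i\<in>I. X i \<omega>) = PiM I D"
proof -
  have "distr M (PiM I M') (\<lambda>\<omega>. \<lambda>i\<in>I. X i \<omega>) = PiM I (\<lambda>i. distr M (M' i) (X i))"
    using indep_vars_iff_distr_eq_PiM'[where I=I and M'=M' and X=X] indep \<open>I \<noteq> {}\<close>
    by (auto simp: indep_vars_def)
  also have "\<dots> = PiM I D"
    using law by (rule PiM_cong[OF refl])
  finally show ?thesis .
qed

lemma (in prob_space) distr_fun_indep_vars:
  assumes indep: "indep_vars M' X I" and "I \<noteq> {}"
    and law: "\<And>i. i \<in> I \<Longrightarrow> distr M (M' i) (X i) = D i"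
    and f: "f \<in> measurable (PiM I M') N"
  shows "distr M N (\<lambda>\<omega>. f (\<lambda>i\<in>I. X i \<omega>)) = distr (PiM I D) N f"
proof -
  have "(\<lambda>\<omega>. \<lambda>i\<in>I. X i \<omega>) \<in> measurable M (PiM I M')"
    using indep by (auto simp: indep_vars_def intro!: measurable_restrict)
  then have "distr M N (\<lambda>\<omega>. f (\<lambda>i\<in>I. X i \<omega>))
      = distr (distr M (PiM I M') (\<lambda>\<omega>. \<lambda>i\<in>I. X i \<omega>)) N f"
    using f by (simp add: distr_distr comp_def)
  then show ?thesis
    using distr_PiM_indep_vars[OF assms(1-3)] by simp
qed

lemma (in prob_space) indep_vars_reindex:
  assumes indep: "indep_vars M' X K" and f: "inj_on f I" "f ` I \<subseteq> K"
  shows "indep_vars (\<lambda>i. M' (f i)) (\<lambda>i. X (f i)) I"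
proof (cases "I = {}")
  case True
  then show ?thesis by (simp add: indep_vars_def indep_sets_def)
next
  case False
  define D where "D k = distr M (M' k) (X k)" for k
  have rv: "random_variable (M' k) (X k)" if "k \<in> K" for k
    using indep that by (auto simp: indep_vars_def)
  have reindex_meas: "(\<lambda>x. \<lambda>i\<in>I. x (f i)) \<in> measurable (PiM K M') (PiM I (\<lambda>i. M' (f i)))"
    using f by (auto intro!: measurable_restrict measurable_component_singleton)
  have "distr M (PiM I (\<lambda>i. M' (f i))) (\<lambda>\<omega>. \<lambda>i\<in>I. X (f i) \<omega>)
      = distr M (PiM I (\<lambda>i. M' (f i))) (\<lambda>\<omega>. (\<lambda>x. \<lambda>i\<in>I. x (f i)) (\<lambda>k\<in>K. X k \<omega>))"
    using f by (intro distr_cong) (auto simp: fun_eq_iff)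
  also have "\<dots> = distr (PiM K D) (PiM I (\<lambda>i. M' (f i))) (\<lambda>x. \<lambda>i\<in>I. x (f i))"
    using False f by (intro distr_fun_indep_vars[OF indep _ _ reindex_meas]) (auto simp: D_def)
  also have "\<dots> = distr (PiM K D) (PiM I (\<lambda>i. D (f i))) (\<lambda>x. \<lambda>i\<in>I. x (f i))"
    by (intro distr_cong sets_PiM_cong) (auto simp: D_def)
  also have "\<dots> = PiM I (\<lambda>i. D (f i))"
    using f rv by (intro distr_PiM_reindex) (auto simp: D_def intro: prob_space_distr)
  finally have "distr M (PiM I (\<lambda>i. M' (f i))) (\<lambda>\<omega>. \<lambda>i\<in>I. X (f i) \<omega>)
      = PiM I (\<lambda>i. D (f i))" .
  then show ?thesis
    using False f rv by (subst indep_vars_iff_distr_eq_PiM') (auto simp: D_def)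
qed

lemma (in prob_space) distr_Max_column:
  fixes X :: "'i \<times> 'j \<Rightarrow> 'a \<Rightarrow> 'b::{linorder_topology, second_countable_topology}"
  assumes indep: "indep_vars (\<lambda>_. borel) X (I \<times> J)" and "finite I" "I \<noteq> {}" "j \<in> J"
    and law: "\<And>p. p \<in> I \<times> J \<Longrightarrow> distr M borel (X p) = D"
  shows "distr M borel (\<lambda>\<omega>. MAX c\<in>I. X (c, j) \<omega>)
      = distr (PiM I (\<lambda>_. D)) borel (\<lambda>x. Max (x ` I))"
proof -
  have "indep_vars (\<lambda>_. borel) (\<lambda>c. X (c, j)) I"
    using indep_vars_reindex[OF indep, of "\<lambda>c. (c, j)" I] \<open>j \<in> J\<close> by (auto simp: inj_on_def)
  then have "distr M borel (\<lambda>\<omega>. Max ((\<lambda>c\<in>I. X (c, j) \<omega>) ` I))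
      = distr (PiM I (\<lambda>_. D)) borel (\<lambda>x. Max (x ` I))"
    using assms(2-5) by (intro distr_fun_indep_vars) (auto intro!: borel_measurable_Max)
  then show ?thesis
    by simp
qed

lemma (in prob_space) indep_vars_Max_columns:
  fixes X :: "'i \<times> 'j \<Rightarrow> 'a \<Rightarrow> 'b::{linorder_topology, second_countable_topology}"
  assumes indep: "indep_vars (\<lambda>_. borel) X (I \<times> J)" and "finite I"
  shows "indep_vars (\<lambda>_. borel) (\<lambda>j \<omega>. MAX c\<in>I. X (c, j) \<omega>) J"
proof -
  have "indep_vars (\<lambda>j. PiM (I \<times> {j}) (\<lambda>_. borel)) (\<lambda>j \<omega>. \<lambda>p\<in>I \<times> {j}. X p \<omega>) J"
    by (rule indep_vars_restrict[OF indep]) (auto simp: disjoint_family_on_def)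
  then have "indep_vars (\<lambda>_. borel) (\<lambda>j \<omega>. (\<lambda>x. MAX c\<in>I. x (c, j)) (\<lambda>p\<in>I \<times> {j}. X p \<omega>)) J"
    by (rule indep_vars_compose2) (use \<open>finite I\<close> in \<open>auto intro!: borel_measurable_Max\<close>)
  then show ?thesis
    by (rule indep_vars_cong[THEN iffD1, rotated -1]) (auto intro!: ext arg_cong[where f=Max])
qed

lemma Max_sum_le_sum_Max:
  fixes f :: "'i \<Rightarrow> 'j \<Rightarrow> 'b::{ordered_comm_monoid_add, linorder}"
  assumes "finite I" "I \<noteq> {}"
  shows "(MAX c\<in>I. \<Sum>j\<in>J. f c j) \<le> (\<Sum>j\<in>J. MAX c\<in>I. f c j)"
  using assms by (auto simp: Max_le_iff intro!: sum_mono)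

lemma distributed_lborel_distr_borel:
  assumes "distributed M lborel X f"
  shows "distr M borel X = density lborel f"
proof -
  have "distr M borel X = distr M lborel X"
    by (rule distr_cong) auto
  then show ?thesis
    using distributed_distr_eq_density[OF assms] by simp
qed

lemma measure_distr_greaterThan:
  fixes X :: "'a \<Rightarrow> 'b::{linorder_topology, second_countable_topology}"
  assumes "X \<in> borel_measurable M"
  shows "measure M {\<omega> \<in> space M. t < X \<omega>} = measure (distr M borel X) {t<..}"
  using assms by (subst measure_distr) (auto intro!: arg_cong[where f="measure M"])

lemma (in finite_measure) measure_greater_mono:
  fixes X Y :: "'a \<Rightarrow> 'b::{linorder_topology, second_countable_topology}"
  assumes "Y \<in> borel_measurable M" and "\<And>\<omega>. \<omega> \<in> space M \<Longrightarrow> X \<omega> \<le> Y \<omega>"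
  shows "measure M {\<omega> \<in> space M. t < X \<omega>} \<le> measure M {\<omega> \<in> space M. t < Y \<omega>}"
proof (rule finite_measure_mono)
  show "{\<omega> \<in> space M. t < Y \<omega>} \<in> sets M"
    using assms(1) by measurable
qed (use assms(2) in \<open>auto intro: order_less_le_trans\<close>)

lemma measure_sum_greater_eq_indep_vars:
  fixes X :: "'i \<Rightarrow> 'a \<Rightarrow> real" and Y :: "'i \<Rightarrow> 'b \<Rightarrow> real"
  assumes "prob_space M" "prob_space M'"
    and indep: "prob_space.indep_vars M (\<lambda>_. borel) X J"
      "prob_space.indep_vars M' (\<lambda>_. borel) Y J"
    and "J \<noteq> {}"
    and law: "\<And>j. j \<in> J \<Longrightarrow> distr M borel (X j) = D j"
      "\<And>j. j \<in> J \<Longrightarrow> distr M' borel (Y j) = D j"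
  shows "measure M {\<omega> \<in> space M. t < (\<Sum>j\<in>J. X j \<omega>)}
      = measure M' {\<omega> \<in> space M'. t < (\<Sum>j\<in>J. Y j \<omega>)}"
proof -
  interpret M: prob_space M by fact
  interpret M': prob_space M' by fact
  have "distr M borel (\<lambda>\<omega>. \<Sum>j\<in>J. (\<lambda>j\<in>J. X j \<omega>) j)
      = distr (PiM J D) borel (\<lambda>x. \<Sum>j\<in>J. x j)"
    using indep(1) \<open>J \<noteq> {}\<close> law(1) by (intro M.distr_fun_indep_vars) auto
  moreover have "distr M' borel (\<lambda>\<omega>. \<Sum>j\<in>J. (\<lambda>j\<in>J. Y j \<omega>) j)
      = distr (PiM J D) borel (\<lambda>x. \<Sum>j\<in>J. x j)"
    using indep(2) \<open>J \<noteq> {}\<close> law(2) by (intro M'.distr_fun_indep_vars) auto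
  moreover have "(\<lambda>\<omega>. \<Sum>j\<in>J. X j \<omega>) \<in> borel_measurable M"
    and "(\<lambda>\<omega>. \<Sum>j\<in>J. Y j \<omega>) \<in> borel_measurable M'"
    using indep by (auto simp: M.indep_vars_def M'.indep_vars_def intro!: borel_measurable_sum)
  ultimately show ?thesis
    by (simp add: measure_distr_greaterThan)
qed

theorem lemma2:
  fixes P :: "'a measure" and R :: "'b measure"
    and n m N :: nat and l :: real
    and X :: "nat \<Rightarrow> nat \<Rightarrow> 'a \<Rightarrow> real"
    and U :: "nat \<Rightarrow> 'b \<Rightarrow> real"
  assumes "prob_space P" and "prob_space R"
    and "0 < n" and "0 < m" and "m dvd n" and "N = n div m"
    and "0 < l"
    and "prob_space.indep_vars P (\<lambda>_. borel) (\<lambda>(c, i). X c i) ({1..N} \<times> {1..m})"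
    and "\<And>c i. c \<in> {1..N} \<Longrightarrow> i \<in> {1..m} \<Longrightarrow>
           distributed P lborel (X c i) (exponential_density l)"
    and "prob_space.indep_vars R (\<lambda>_. borel) U {1..m}"
    and "\<And>i. i \<in> {1..m} \<Longrightarrow> distr R borel (U i) = max_exp_law N l"
  shows "\<forall>t::real.
           measure P {\<omega> \<in> space P. (MAX c\<in>{1..N}. (\<Sum>i=1..m. X c i \<omega>)) > t}
         \<le> measure R {\<omega> \<in> space R. (\<Sum>i=1..m. U i \<omega>) > t}"
proof
  fix t :: real
  interpret P: prob_space P by fact
  define I where "I = {1..N}"
  define J where "J = {1..m}"
  define W where "W = (\<lambda>j \<omega>. MAX c\<in>I. X c j \<omega>)"
  have "I \<noteq> {}" and "J \<noteq> {}"
    using assms(3-6) by (auto simp: I_def J_def elim!: dvdE)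
  have indX: "P.indep_vars (\<lambda>_. borel) (\<lambda>(c, i). X c i) (I \<times> J)"
    using assms(8) by (simp add: I_def J_def)
  have lawX: "distr P borel ((\<lambda>(c, i). X c i) p) = density lborel (exponential_density l)"
    if "p \<in> I \<times> J" for p
    using assms(9) that by (auto simp: I_def J_def distributed_lborel_distr_borel)
  have lawW: "distr P borel (W j) = max_exp_law N l" if "j \<in> J" for j
    using P.distr_Max_column[OF indX _ \<open>I \<noteq> {}\<close> that lawX]
    by (simp add: W_def I_def max_exp_law_def)
  have indW: "P.indep_vars (\<lambda>_. borel) W J"
    unfolding W_def using P.indep_vars_Max_columns[OF indX] by (simp add: I_def)
  have "P.prob {\<omega> \<in> space P. t < (MAX c\<in>I. \<Sum>i\<in>J. X c i \<omega>)}
      \<le> P.prob {\<omega> \<in> space P. t < (\<Sum>j\<in>J. W j \<omega>)}"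
  proof (rule P.measure_greater_mono)
    show "(\<lambda>\<omega>. \<Sum>j\<in>J. W j \<omega>) \<in> borel_measurable P"
      using indW by (auto simp: P.indep_vars_def intro!: borel_measurable_sum)
    show "(MAX c\<in>I. \<Sum>i\<in>J. X c i \<omega>) \<le> (\<Sum>j\<in>J. W j \<omega>)" for \<omega>
      unfolding W_def using \<open>I \<noteq> {}\<close> by (intro Max_sum_le_sum_Max) (simp add: I_def)
  qed
  also have "\<dots> = measure R {\<omega> \<in> space R. t < (\<Sum>j\<in>J. U j \<omega>)}"
    using assms(1,2,10,11) indW lawW \<open>J \<noteq> {}\<close>
    by (intro measure_sum_greater_eq_indep_vars[where D="\<lambda>_. max_exp_law N l"]) (auto simp: J_def)
  finally show "P.prob {\<omega> \<in> space P. (MAX c\<in>{1..N}. \<Sum>i=1..m. X c i \<omega>) > t}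
      \<le> measure R {\<omega> \<in> space R. (\<Sum>i=1..m. U i \<omega>) > t}"
    by (simp add: I_def J_def)
qed

end
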